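(* Let $w=0$ in the dynamical system described in the context. Let $(\Sigma_+,\Sigma_A,\Sigma_B,\Sigma_C,v_{(1)},v_{(2)},\Omega_{(1)},\Omega_{(2)})(\tau)$ be a solution defined for all $\tau\ge\tau_0$ which at $\tau_0$ lies in the interior state space, i.e. $\Omega_{(1)}\Omega_{(2)}>0$ and $0<v_{(i)}^2<1$ for $i=1,2$, and satisfies the constraints. Then as $\tau\to+\infty$: $q\to \tfrac12$, $\Omega_{(1)}+\Omega_{(2)}\to 1$, $\Sigma_+,\Sigma_A,\Sigma_B,\Sigma_C\to 0$ and $v_{(1)},v_{(2)}\to 0$; i.e. the solution approaches the line of flat Friedmann–Lemaître fixed points $\Sigma_\pm=\Sigma_A=\Sigma_B=\Sigma_C=0$, $v_{(1)}=v_{(2)}=0$, $\Omega_{(1)}+\Omega_{(2)}=1$.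
   Context: Fix a constant $w\in[0,1)$ (the common equation of state parameter of two perfect fluids, $p_{(i)}=w\rho_{(i)}$). The state variables are real functions of a time $\tau$: $\Sigma_+,\Sigma_A,\Sigma_B,\Sigma_C,v_{(1)},v_{(2)},\Omega_{(1)},\Omega_{(2)}$, with $'$ denoting $d/d\tau$. Define $\Sigma^2=\Sigma_+^2+\Sigma_A^2+\Sigma_B^2+\Sigma_C^2$, $G^{(i)}_\pm=1\pm w v_{(i)}^2$, $Q_{(i)}=(1+w)(G^{(i)}_+)^{-1}v_{(i)}\Omega_{(i)}$, $P_{(i)}=w\Omega_{(i)}+\tfrac13(1-3w)Q_{(i)}v_{(i)}$, $\Omega_m=\Omega_{(1)}+\Omega_{(2)}$, $P_m=P_{(1)}+P_{(2)}$, and $q=2\Sigma^2+\tfrac12(\Omega_m+3P_m)$. The evolution equations are $\Sigma_+'=-(2-q)\Sigma_++3\Sigma_A^2-Q_{(1)}v_{(1)}-Q_{(2)}v_{(2)}$, $\Sigma_A'=-(2-q+3\Sigma_++\sqrt3\Sigma_B)\Sigma_A$, $\Sigma_B'=-(2-q)\Sigma_B+\sqrt3\Sigma_A^2-2\sqrt3\Sigma_C^2$, $\Sigma_C'=-(2-q-2\sqrt3\Sigma_B)\Sigma_C$, $v_{(i)}'=(G^{(i)}_-)^{-1}(1-v_{(i)}^2)(3w-1+2\Sigma_+)v_{(i)}$, $\Omega_{(i)}'=(2q-1-3w)\Omega_{(i)}+(3w-1+2\Sigma_+)Q_{(i)}v_{(i)}$, for $i=1,2$, subject to the constraints $1-\Sigma^2-\Omega_{(1)}-\Omega_{(2)}=0$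 and $Q_{(1)}+Q_{(2)}=0$, with $\Omega_{(i)}\ge0$, $v_{(i)}^2\le 1$. (This describes Bianchi type I cosmologies with two tilted perfect fluids, in expansion-normalized variables.) *)

theory Defs
  imports "HOL-Analysis.Analysis"
begin

text \<open>Bianchi I cosmologies with two tilted perfect fluids, expansion-normalized
variables; w is the common equation of state parameter.\<close>

definition Gp :: "real \<Rightarrow> real \<Rightarrow> real" where
  "Gp w v = 1 + w * v\<^sup>2"

definition Gm :: "real \<Rightarrow> real \<Rightarrow> real" where
  "Gm w v = 1 - w * v\<^sup>2"

definition Qf :: "real \<Rightarrow> real \<Rightarrow> real \<Rightarrow> real" where
  "Qf w v Om = (1 + w) * v * Om / Gp w v"

definition Pf :: "real \<Rightarrow> real \<Rightarrow> real \<Rightarrow> real" where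
  "Pf w v Om = w * Om + (1 - 3 * w) / 3 * Qf w v Om * v"

definition Sig2 :: "real \<Rightarrow> real \<Rightarrow> real \<Rightarrow> real \<Rightarrow> real" where
  "Sig2 Sp SA SB SC = Sp\<^sup>2 + SA\<^sup>2 + SB\<^sup>2 + SC\<^sup>2"

definition qf :: "real \<Rightarrow> real \<Rightarrow> real \<Rightarrow> real \<Rightarrow> real \<Rightarrow> real \<Rightarrow> real \<Rightarrow> real \<Rightarrow> real \<Rightarrow> real" where
  "qf w Sp SA SB SC v1 v2 O1 O2 =
     2 * Sig2 Sp SA SB SC + (1/2) * ((O1 + O2) + 3 * (Pf w v1 O1 + Pf w v2 O2))"

definition is_solution ::
  "real \<Rightarrow> real \<Rightarrow> (real \<Rightarrow> real) \<Rightarrow> (real \<Rightarrow> real) \<Rightarrow> (real \<Rightarrow> real) \<Rightarrow> (real \<Rightarrow> real)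
   \<Rightarrow> (real \<Rightarrow> real) \<Rightarrow> (real \<Rightarrow> real) \<Rightarrow> (real \<Rightarrow> real) \<Rightarrow> (real \<Rightarrow> real) \<Rightarrow> bool" where
  "is_solution w t0 Sp SA SB SC v1 v2 O1 O2 \<longleftrightarrow>
    (\<forall>t\<ge>t0.
      (let q = qf w (Sp t) (SA t) (SB t) (SC t) (v1 t) (v2 t) (O1 t) (O2 t);
           Q1 = Qf w (v1 t) (O1 t); Q2 = Qf w (v2 t) (O2 t) in
       (Sp has_real_derivative
          (-(2 - q) * Sp t + 3 * (SA t)\<^sup>2 - Q1 * v1 t - Q2 * v2 t)) (at t within {t0..}) \<and>
       (SA has_real_derivative
          (-(2 - q + 3 * Sp t + sqrt 3 * SB t) * SA t)) (at t within {t0..}) \<and>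
       (SB has_real_derivative
          (-(2 - q) * SB t + sqrt 3 * (SA t)\<^sup>2 - 2 * sqrt 3 * (SC t)\<^sup>2)) (at t within {t0..}) \<and>
       (SC has_real_derivative
          (-(2 - q - 2 * sqrt 3 * SB t) * SC t)) (at t within {t0..}) \<and>
       (v1 has_real_derivative
          ((1 - (v1 t)\<^sup>2) * (3 * w - 1 + 2 * Sp t) * v1 t / Gm w (v1 t))) (at t within {t0..}) \<and>
       (v2 has_real_derivative
          ((1 - (v2 t)\<^sup>2) * (3 * w - 1 + 2 * Sp t) * v2 t / Gm w (v2 t))) (at t within {t0..}) \<and>
       (O1 has_real_derivative
          ((2 * q - 1 - 3 * w) * O1 t + (3 * w - 1 + 2 * Sp t) * Q1 * v1 t)) (at t within {t0..}) \<and>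
       (O2 has_real_derivative
          ((2 * q - 1 - 3 * w) * O2 t + (3 * w - 1 + 2 * Sp t) * Q2 * v2 t)) (at t within {t0..})))"

definition admissible :: "real \<Rightarrow> real \<Rightarrow> real \<Rightarrow> real \<Rightarrow> real \<Rightarrow> real \<Rightarrow> real \<Rightarrow> real \<Rightarrow> real \<Rightarrow> bool" where
  "admissible w Sp SA SB SC v1 v2 O1 O2 \<longleftrightarrow>
     1 - Sig2 Sp SA SB SC - O1 - O2 = 0 \<and> Qf w v1 O1 + Qf w v2 O2 = 0 \<and>
     O1 \<ge> 0 \<and> O2 \<ge> 0 \<and> v1\<^sup>2 \<le> 1 \<and> v2\<^sup>2 \<le> 1"

end

theory Submission
  imports Defs
begin

(* Put F = 2q - 1 and a = 2 Sigma_+ - 1.  Using the constraint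
   Sigma^2 = 1 - Omega_1 - Omega_2 one finds F = 3 Sigma^2 + v_1^2 Omega_1 + v_2^2 Omega_2,
   so 0 <= F <= 3, and the fluid equations reduce to
       v' = (1 - v^2) a v,      Omega' = (F + a v^2) Omega.
   Consequently each fluid energy E = Omega^2 (1 - v^2) obeys E' = 2 F E: it is
   nondecreasing, bounded by 1, and positive for interior initial data.  Hence
   E' >= 2 E(t0) F with E bounded, i.e. F is integrable on [t0, oo); as F also has a
   bounded derivative, a Barbalat-type argument gives F -> 0.  Every claimed limit
   follows from F -> 0: q = (F + 1)/2, each shear variable squared is at most F,
   1 - F <= Omega_1 + Omega_2 <= 1, and v_i^2 <= F / E_i(t0). *)

(* A function with nonnegative derivative (taken within any superset S of [a, b]) is
   nondecreasing on [a, b]; one-sided derivatives at t0 are all the solution provides. *)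
lemma nondecreasing_if_nonneg_derivative:
  fixes g g' :: "real \<Rightarrow> real"
  assumes "a \<le> b" and "{a..b} \<subseteq> S"
    and deriv: "\<And>x. x \<in> {a..b} \<Longrightarrow> (g has_real_derivative g' x) (at x within S)"
    and nonneg: "\<And>x. x \<in> {a..b} \<Longrightarrow> 0 \<le> g' x"
  shows "g a \<le> g b"
proof -
  have deriv_Icc: "(g has_real_derivative g' x) (at x within {a..b})" if "x \<in> {a..b}" for x
    using DERIV_subset[OF deriv[OF that] \<open>{a..b} \<subseteq> S\<close>] .
  show ?thesis
  proof (rule DERIV_nonneg_imp_increasing_open[OF \<open>a \<le> b\<close>])
    fix x assume x: "a < x" "x < b"
    then have "(g has_real_derivative g' x) (at x)"
      using deriv_Icc[of x] at_within_Icc_at[OF x] by simp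
    then show "\<exists>y. DERIV g x :> y \<and> 0 \<le> y" using nonneg[of x] x by auto
  next
    show "continuous_on {a..b} g"
      unfolding continuous_on_eq_continuous_within using deriv_Icc DERIV_continuous by blast
  qed
qed

(* If F >= 0 cannot drop faster than slope L, and F drives a
   bounded quantity E upwards (E' >= k F), then F -> 0: every time F >= eps, F stays
   >= eps/2 for a time eps/(2L), during which E gains a fixed amount; so this can
   happen only finitely often. *)
lemma tendsto_zero_if_lipschitz_and_integrable:
  fixes F E E' :: "real \<Rightarrow> real"
  assumes L: "0 < L" and k: "0 < k"
    and F_nonneg: "\<And>t. t0 \<le> t \<Longrightarrow> 0 \<le> F t"
    and F_lipschitz: "\<And>s u. t0 \<le> s \<Longrightarrow> s \<le> u \<Longrightarrow> F s - F u \<le> L * (u - s)"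
    and E_deriv: "\<And>t. t0 \<le> t \<Longrightarrow> (E has_real_derivative E' t) (at t within {t0..})"
    and E_growth: "\<And>t. t0 \<le> t \<Longrightarrow> k * F t \<le> E' t"
    and E_bounded: "\<And>t. t0 \<le> t \<Longrightarrow> E t \<le> M"
  shows "(F \<longlongrightarrow> 0) at_top"
proof -
  have E_mono: "E s \<le> E u" if "t0 \<le> s" "s \<le> u" for s u
  proof (rule nondecreasing_if_nonneg_derivative[where S="{t0..}" and g=E and g'=E'])
    fix x assume x: "x \<in> {s..u}"
    then show "(E has_real_derivative E' x) (at x within {t0..})" using E_deriv that by auto
    have "t0 \<le> x" using x that by simp
    then have "0 \<le> k * F x" using F_nonneg k by simp
    then show "0 \<le> E' x" using E_growth[OF \<open>t0 \<le> x\<close>] by linarith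
  qed (use that in auto)
  have E_jump: "E t + k * \<epsilon> / 2 * (\<epsilon> / (2 * L)) \<le> E (t + \<epsilon> / (2 * L))"
    if t: "t0 \<le> t" and \<epsilon>: "0 < \<epsilon>" "\<epsilon> \<le> F t" for t \<epsilon>
  proof -
    define h where "h = \<epsilon> / (2 * L)"
    have "E t - k * \<epsilon> / 2 * t \<le> E (t + h) - k * \<epsilon> / 2 * (t + h)"
    proof (rule nondecreasing_if_nonneg_derivative
        [where S="{t0..}" and g="\<lambda>x. E x - k * \<epsilon> / 2 * x" and g'="\<lambda>x. E' x - k * \<epsilon> / 2"])
      fix x assume x: "x \<in> {t..t + h}"
      then show "((\<lambda>x. E x - k * \<epsilon> / 2 * x) has_real_derivative E' x - k * \<epsilon> / 2) (at x within {t0..})"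
        using E_deriv[of x] t by (auto intro!: derivative_eq_intros)
      have "x - t \<le> h" using x by simp
      then have "L * (x - t) \<le> L * h" using L by simp
      then have "F t - F x \<le> L * h" using F_lipschitz[of t x] x t by auto
      then have "\<epsilon> / 2 \<le> F x" using \<epsilon> L by (simp add: h_def)
      then have "k * \<epsilon> / 2 \<le> k * F x" using k by (simp add: mult_left_mono)
      then show "0 \<le> E' x - k * \<epsilon> / 2" using E_growth[of x] x t by auto
    qed (use t \<epsilon> L in \<open>auto simp: h_def\<close>)
    then show ?thesis by (simp add: h_def algebra_simps)
  qed
  show ?thesis
  proof (rule order_tendstoI)
    fix c :: real assume "c < 0"
    then show "eventually (\<lambda>t. c < F t) at_top"
      using F_nonneg by (intro eventually_at_top_linorderI[of t0]) fastforce
  next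
    fix \<epsilon> :: real assume \<epsilon>: "0 < \<epsilon>"
    show "eventually (\<lambda>t. F t < \<epsilon>) at_top"
    proof (rule ccontr)
      assume "\<not> eventually (\<lambda>t. F t < \<epsilon>) at_top"
      then have frequently_large: "\<exists>t\<ge>T. \<epsilon> \<le> F t" for T
        unfolding eventually_at_top_linorder by (meson not_less)
      define \<delta> where "\<delta> = k * \<epsilon> / 2 * (\<epsilon> / (2 * L))"
      have \<delta>: "0 < \<delta>" using k \<epsilon> L by (simp add: \<delta>_def)
      have E_unbounded: "\<exists>t\<ge>t0. E t0 + real n * \<delta> \<le> E t" for n :: nat
      proof (induction n)
        case 0
        then show ?case by auto
      next
        case (Suc n)
        then obtain t where t: "t0 \<le> t" "E t0 + real n * \<delta> \<le> E t" by blast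
        obtain t' where t': "t \<le> t'" "\<epsilon> \<le> F t'" using frequently_large by blast
        have "E t0 + real n * \<delta> + \<delta> \<le> E (t' + \<epsilon> / (2 * L))"
          using t E_mono[of t t'] E_jump[of t' \<epsilon>, folded \<delta>_def] t' \<epsilon> by linarith
        then have "E t0 + real (Suc n) * \<delta> \<le> E (t' + \<epsilon> / (2 * L))"
          by (simp add: algebra_simps)
        moreover have "0 \<le> \<epsilon> / (2 * L)" using \<epsilon> L by simp
        then have "t0 \<le> t' + \<epsilon> / (2 * L)" using t t' by linarith
        ultimately show ?case by blast
      qed
      obtain n :: nat where "M - E t0 < real n * \<delta>" using ex_less_of_nat_mult[OF \<delta>] by blast
      moreover obtain t where "t0 \<le> t" "E t0 + real n * \<delta> \<le> E t" using E_unbounded by blast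
      ultimately show False using E_bounded[of t] by linarith
    qed
  qed
qed

lemma tendsto_zero_if_square_bounded:
  fixes g G :: "real \<Rightarrow> real"
  assumes "(G \<longlongrightarrow> 0) at_top" and "\<And>t. c \<le> t \<Longrightarrow> (g t)\<^sup>2 \<le> G t"
  shows "(g \<longlongrightarrow> 0) at_top"
proof (rule Lim_null_comparison)
  show "((\<lambda>t. sqrt (G t)) \<longlongrightarrow> 0) at_top" using tendsto_real_sqrt[OF assms(1)] by simp
  show "eventually (\<lambda>t. norm (g t) \<le> sqrt (G t)) at_top"
    using assms(2) real_sqrt_le_mono by (intro eventually_at_top_linorderI[of c]) fastforce
qed

definition fluid_energy :: "real \<Rightarrow> real \<Rightarrow> real" where
  "fluid_energy v Om = Om\<^sup>2 * (1 - v\<^sup>2)"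

lemma fluid_energy_derivative:
  assumes "(v has_real_derivative (1 - (v t)\<^sup>2) * a * v t) (at t within S)"
    and "(Om has_real_derivative (F + a * (v t)\<^sup>2) * Om t) (at t within S)"
  shows "((\<lambda>s. fluid_energy (v s) (Om s)) has_real_derivative 2 * F * fluid_energy (v t) (Om t))
           (at t within S)"
proof -
  have "((\<lambda>s. (Om s)\<^sup>2 * (1 - (v s)\<^sup>2)) has_real_derivative
          2 * Om t * ((F + a * (v t)\<^sup>2) * Om t) * (1 - (v t)\<^sup>2)
          - (Om t)\<^sup>2 * (2 * v t * ((1 - (v t)\<^sup>2) * a * v t))) (at t within S)"
    by (rule derivative_eq_intros assms refl | simp)+
  moreover have "2 * Om t * ((F + a * (v t)\<^sup>2) * Om t) * (1 - (v t)\<^sup>2)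
          - (Om t)\<^sup>2 * (2 * v t * ((1 - (v t)\<^sup>2) * a * v t)) = 2 * F * fluid_energy (v t) (Om t)"
    by (simp add: fluid_energy_def algebra_simps power2_eq_square)
  ultimately show ?thesis by (simp add: fluid_energy_def)
qed

(* Derivative of the contribution (3 - v^2) Omega of one fluid to 3 - F. *)
lemma fluid_weight_derivative:
  assumes "(v has_real_derivative (1 - (v t)\<^sup>2) * a * v t) (at t within S)"
    and "(Om has_real_derivative (F + a * (v t)\<^sup>2) * Om t) (at t within S)"
  shows "((\<lambda>s. (3 - (v s)\<^sup>2) * Om s) has_real_derivative
           Om t * ((3 - (v t)\<^sup>2) * (F + a * (v t)\<^sup>2) - 2 * a * (v t)\<^sup>2 * (1 - (v t)\<^sup>2)))
           (at t within S)"
proof -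
  have "((\<lambda>s. (3 - (v s)\<^sup>2) * Om s) has_real_derivative
          - (2 * v t * ((1 - (v t)\<^sup>2) * a * v t)) * Om t + (3 - (v t)\<^sup>2) * ((F + a * (v t)\<^sup>2) * Om t))
          (at t within S)"
    by (rule derivative_eq_intros assms refl | simp)+
  then show ?thesis by (simp add: algebra_simps power2_eq_square)
qed

(* On the state space that derivative is bounded by 24; this makes F Lipschitz. *)
lemma fluid_weight_rate_bound:
  fixes v Om F a :: real
  assumes v: "v\<^sup>2 \<le> 1" and Om: "0 \<le> Om" "Om \<le> 1" and F: "0 \<le> F" "F \<le> 3" and a: "\<bar>a\<bar> \<le> 3"
  shows "\<bar>Om * ((3 - v\<^sup>2) * (F + a * v\<^sup>2) - 2 * a * v\<^sup>2 * (1 - v\<^sup>2))\<bar> \<le> 24"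
proof -
  have v0: "0 \<le> v\<^sup>2" by simp
  have "\<bar>a * v\<^sup>2\<bar> \<le> 3 * 1" unfolding abs_mult using a v by (intro mult_mono) auto
  then have "\<bar>F + a * v\<^sup>2\<bar> \<le> 6" using abs_triangle_ineq[of F "a * v\<^sup>2"] F by simp
  moreover have "\<bar>3 - v\<^sup>2\<bar> \<le> 3" using v v0 by simp
  ultimately have "\<bar>(3 - v\<^sup>2) * (F + a * v\<^sup>2)\<bar> \<le> 3 * 6"
    unfolding abs_mult by (intro mult_mono) auto
  moreover have "\<bar>2 * a * v\<^sup>2 * (1 - v\<^sup>2)\<bar> \<le> 2 * 3 * 1 * 1"
    unfolding abs_mult using a v v0 by (intro mult_mono) auto
  ultimately have "\<bar>(3 - v\<^sup>2) * (F + a * v\<^sup>2) - 2 * a * v\<^sup>2 * (1 - v\<^sup>2)\<bar> \<le> 24" by linarith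
  then have "\<bar>Om\<bar> * \<bar>(3 - v\<^sup>2) * (F + a * v\<^sup>2) - 2 * a * v\<^sup>2 * (1 - v\<^sup>2)\<bar> \<le> 1 * 24"
    using Om by (intro mult_mono) auto
  then show ?thesis by (simp add: abs_mult)
qed

(* Since E' = 2 F E with F >= 0 and E >= 0, the fluid energy never decreases. *)
lemma fluid_energy_nondecreasing:
  fixes v Om a F :: "real \<Rightarrow> real"
  assumes v: "\<And>t. t0 \<le> t \<Longrightarrow> (v has_real_derivative (1 - (v t)\<^sup>2) * a t * v t) (at t within {t0..})"
    and Om: "\<And>t. t0 \<le> t \<Longrightarrow> (Om has_real_derivative (F t + a t * (v t)\<^sup>2) * Om t) (at t within {t0..})"
    and F_nonneg: "\<And>t. t0 \<le> t \<Longrightarrow> 0 \<le> F t"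
    and v_bound: "\<And>t. t0 \<le> t \<Longrightarrow> (v t)\<^sup>2 \<le> 1"
    and "t0 \<le> s" "s \<le> u"
  shows "fluid_energy (v s) (Om s) \<le> fluid_energy (v u) (Om u)"
proof (rule nondecreasing_if_nonneg_derivative
    [where S="{t0..}" and g="\<lambda>t. fluid_energy (v t) (Om t)"
      and g'="\<lambda>t. 2 * F t * fluid_energy (v t) (Om t)"])
  fix t assume "t \<in> {s..u}"
  then have t: "t0 \<le> t" using \<open>t0 \<le> s\<close> by simp
  show "((\<lambda>s. fluid_energy (v s) (Om s)) has_real_derivative 2 * F t * fluid_energy (v t) (Om t))
          (at t within {t0..})"
    using v[OF t] Om[OF t] by (rule fluid_energy_derivative)
  show "0 \<le> 2 * F t * fluid_energy (v t) (Om t)"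
    using F_nonneg[OF t] v_bound[OF t] by (simp add: fluid_energy_def)
qed (use assms in auto)

lemma tilt_square_bound:
  fixes v Om e :: real
  assumes "e \<le> fluid_energy v Om" and "v\<^sup>2 \<le> 1" and "0 \<le> Om" and "Om \<le> 1"
  shows "v\<^sup>2 * e \<le> v\<^sup>2 * Om"
proof -
  have "e \<le> Om\<^sup>2" using assms(1,2) mult_left_mono[of "1 - v\<^sup>2" 1 "Om\<^sup>2"] by (simp add: fluid_energy_def)
  also have "\<dots> \<le> Om" using assms(3,4) by (simp add: power2_eq_square mult_left_le)
  finally show ?thesis by (simp add: mult_left_mono)
qed

lemma Sig2_bounds:
  shows "0 \<le> Sig2 a b c d" and "a\<^sup>2 \<le> Sig2 a b c d" "b\<^sup>2 \<le> Sig2 a b c d" "c\<^sup>2 \<le> Sig2 a b c d" "d\<^sup>2 \<le> Sig2 a b c d"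
  by (simp_all add: Sig2_def add_increasing add_increasing2 add_nonneg_nonneg)

context
  fixes t0 :: real and Sp SA SB SC v1 v2 O1 O2 :: "real \<Rightarrow> real"
  assumes sol: "is_solution 0 t0 Sp SA SB SC v1 v2 O1 O2"
    and adm: "\<forall>t\<ge>t0. admissible 0 (Sp t) (SA t) (SB t) (SC t) (v1 t) (v2 t) (O1 t) (O2 t)"
begin

(* F = 2q - 1, written in a form that only involves the fluid variables. *)
definition dust_F :: "real \<Rightarrow> real" where
  "dust_F t = 3 - (3 - (v1 t)\<^sup>2) * O1 t - (3 - (v2 t)\<^sup>2) * O2 t"

(* The common growth rate a = 2 Sigma_+ - 1 of the tilts, v_i' = (1 - v_i^2) a v_i. *)
definition tilt_rate :: "real \<Rightarrow> real" where
  "tilt_rate t = 2 * Sp t - 1"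

lemma state_bounds:
  assumes "t0 \<le> t"
  shows constraint: "Sig2 (Sp t) (SA t) (SB t) (SC t) = 1 - O1 t - O2 t"
    and "0 \<le> O1 t" "0 \<le> O2 t" "O1 t \<le> 1" "O2 t \<le> 1" "(v1 t)\<^sup>2 \<le> 1" "(v2 t)\<^sup>2 \<le> 1"
proof -
  note Sig2_bounds(1)[of "Sp t" "SA t" "SB t" "SC t"]
  with adm assms show "Sig2 (Sp t) (SA t) (SB t) (SC t) = 1 - O1 t - O2 t"
    "0 \<le> O1 t" "0 \<le> O2 t" "O1 t \<le> 1" "O2 t \<le> 1" "(v1 t)\<^sup>2 \<le> 1" "(v2 t)\<^sup>2 \<le> 1"
    by (auto simp: admissible_def)
qed

lemma dust_F_decomposition:
  assumes "t0 \<le> t"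
  shows "dust_F t = 3 * Sig2 (Sp t) (SA t) (SB t) (SC t) + (v1 t)\<^sup>2 * O1 t + (v2 t)\<^sup>2 * O2 t"
  using constraint[OF assms] by (simp add: dust_F_def algebra_simps)

lemma dust_F_bounds:
  assumes "t0 \<le> t"
  shows "Sig2 (Sp t) (SA t) (SB t) (SC t) \<le> dust_F t"
    and "(v1 t)\<^sup>2 * O1 t \<le> dust_F t" "(v2 t)\<^sup>2 * O2 t \<le> dust_F t"
    and "0 \<le> dust_F t" "dust_F t \<le> 3"
proof -
  note bounds = state_bounds[OF assms]
  have "0 \<le> (v1 t)\<^sup>2 * O1 t" "(v1 t)\<^sup>2 * O1 t \<le> O1 t"
    using bounds mult_right_mono[of "(v1 t)\<^sup>2" 1 "O1 t"] by auto
  moreover have "0 \<le> (v2 t)\<^sup>2 * O2 t" "(v2 t)\<^sup>2 * O2 t \<le> O2 t"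
    using bounds mult_right_mono[of "(v2 t)\<^sup>2" 1 "O2 t"] by auto
  ultimately show "Sig2 (Sp t) (SA t) (SB t) (SC t) \<le> dust_F t"
    "(v1 t)\<^sup>2 * O1 t \<le> dust_F t" "(v2 t)\<^sup>2 * O2 t \<le> dust_F t" "0 \<le> dust_F t" "dust_F t \<le> 3"
    using Sig2_bounds(1)[of "Sp t" "SA t" "SB t" "SC t"] bounds dust_F_decomposition[OF assms] by linarith+
qed

lemma q_eq_dust_F:
  assumes "t0 \<le> t"
  shows "qf 0 (Sp t) (SA t) (SB t) (SC t) (v1 t) (v2 t) (O1 t) (O2 t) = (dust_F t + 1) / 2"
  using constraint[OF assms]
  by (simp add: qf_def Pf_def Qf_def Gp_def dust_F_def algebra_simps power2_eq_square)

(* |a| <= 3, since Sigma_+^2 <= Sigma^2 <= 1. *)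
lemma tilt_rate_bound:
  assumes "t0 \<le> t"
  shows "\<bar>tilt_rate t\<bar> \<le> 3"
proof -
  have "(Sp t)\<^sup>2 \<le> 1"
    using Sig2_bounds(2)[of "Sp t" "SA t" "SB t" "SC t"] constraint[OF assms] state_bounds(2,3)[OF assms]
    by linarith
  then show ?thesis by (simp add: tilt_rate_def abs_square_le_1)
qed

lemma reduced_equations:
  assumes "t0 \<le> t"
  shows "(v1 has_real_derivative (1 - (v1 t)\<^sup>2) * tilt_rate t * v1 t) (at t within {t0..})"
    and "(v2 has_real_derivative (1 - (v2 t)\<^sup>2) * tilt_rate t * v2 t) (at t within {t0..})"
    and "(O1 has_real_derivative (dust_F t + tilt_rate t * (v1 t)\<^sup>2) * O1 t) (at t within {t0..})"
    and "(O2 has_real_derivative (dust_F t + tilt_rate t * (v2 t)\<^sup>2) * O2 t) (at t within {t0..})"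
proof -
  note eqs = sol[unfolded is_solution_def Let_def, rule_format, OF assms, unfolded q_eq_dust_F[OF assms]]
  have "(1 - (v t)\<^sup>2) * (3 * 0 - 1 + 2 * Sp t) * v t / Gm 0 (v t) = (1 - (v t)\<^sup>2) * tilt_rate t * v t"
    for v :: "real \<Rightarrow> real"
    by (simp add: Gm_def tilt_rate_def)
  moreover have "(2 * ((dust_F t + 1) / 2) - 1 - 3 * 0) * Om t + (3 * 0 - 1 + 2 * Sp t) * Qf 0 (v t) (Om t) * v t
      = (dust_F t + tilt_rate t * (v t)\<^sup>2) * Om t" for v Om :: "real \<Rightarrow> real"
    by (simp add: Qf_def Gp_def tilt_rate_def algebra_simps power2_eq_square)
  ultimately show "(v1 has_real_derivative (1 - (v1 t)\<^sup>2) * tilt_rate t * v1 t) (at t within {t0..})"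
    "(v2 has_real_derivative (1 - (v2 t)\<^sup>2) * tilt_rate t * v2 t) (at t within {t0..})"
    "(O1 has_real_derivative (dust_F t + tilt_rate t * (v1 t)\<^sup>2) * O1 t) (at t within {t0..})"
    "(O2 has_real_derivative (dust_F t + tilt_rate t * (v2 t)\<^sup>2) * O2 t) (at t within {t0..})"
    using eqs by simp_all
qed

(* F has derivative bounded by 48, so it cannot drop faster than slope 48. *)
lemma dust_F_lipschitz:
  assumes "t0 \<le> s" "s \<le> u"
  shows "dust_F s - dust_F u \<le> 48 * (u - s)"
proof -
  define rate where "rate v Om t =
    Om t * ((3 - (v t)\<^sup>2) * (dust_F t + tilt_rate t * (v t)\<^sup>2) - 2 * tilt_rate t * (v t)\<^sup>2 * (1 - (v t)\<^sup>2))"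
    for v Om :: "real \<Rightarrow> real" and t
  define W1 where "W1 t = (3 - (v1 t)\<^sup>2) * O1 t" for t
  define W2 where "W2 t = (3 - (v2 t)\<^sup>2) * O2 t" for t
  have dust_F_W: "dust_F = (\<lambda>t. 3 - W1 t - W2 t)" by (simp add: fun_eq_iff dust_F_def W1_def W2_def)
  have "48 * s + dust_F s \<le> 48 * u + dust_F u"
  proof (rule nondecreasing_if_nonneg_derivative
      [where S="{t0..}" and g="\<lambda>t. 48 * t + dust_F t" and g'="\<lambda>t. 48 - rate v1 O1 t - rate v2 O2 t"])
    fix t assume "t \<in> {s..u}"
    then have t: "t0 \<le> t" using assms by simp
    have "(W1 has_real_derivative rate v1 O1 t) (at t within {t0..})"
      "(W2 has_real_derivative rate v2 O2 t) (at t within {t0..})"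
      unfolding W1_def W2_def rate_def
      using fluid_weight_derivative[OF reduced_equations(1,3)[OF t]]
        fluid_weight_derivative[OF reduced_equations(2,4)[OF t]] by simp_all
    then show "((\<lambda>t. 48 * t + dust_F t) has_real_derivative 48 - rate v1 O1 t - rate v2 O2 t)
        (at t within {t0..})"
      unfolding dust_F_W by (auto intro!: derivative_eq_intros)
    have "\<bar>rate v1 O1 t\<bar> \<le> 24" "\<bar>rate v2 O2 t\<bar> \<le> 24"
      unfolding rate_def using state_bounds[OF t] dust_F_bounds(4,5)[OF t] tilt_rate_bound[OF t]
      by (simp_all add: fluid_weight_rate_bound)
    then show "0 \<le> 48 - rate v1 O1 t - rate v2 O2 t" by linarith
  qed (use assms in auto)
  then show ?thesis by simp
qed

lemma fluid_energies_lower_bound: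
  assumes "t0 \<le> t"
  shows "fluid_energy (v1 t0) (O1 t0) \<le> fluid_energy (v1 t) (O1 t)"
    and "fluid_energy (v2 t0) (O2 t0) \<le> fluid_energy (v2 t) (O2 t)"
  using fluid_energy_nondecreasing[OF reduced_equations(1,3) dust_F_bounds(4) state_bounds(6) order_refl assms]
    fluid_energy_nondecreasing[OF reduced_equations(2,4) dust_F_bounds(4) state_bounds(7) order_refl assms]
  by simp_all

context
  assumes int_O: "O1 t0 * O2 t0 > 0"
    and int_v1: "0 < (v1 t0)\<^sup>2" "(v1 t0)\<^sup>2 < 1"
    and int_v2: "0 < (v2 t0)\<^sup>2" "(v2 t0)\<^sup>2 < 1"
begin

lemma initial_energies_pos:
  shows "0 < fluid_energy (v1 t0) (O1 t0)" and "0 < fluid_energy (v2 t0) (O2 t0)"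
proof -
  have "0 < O1 t0" "0 < O2 t0"
    using int_O state_bounds(2,3)[of t0] by (auto simp: zero_less_mult_iff)
  then show "0 < fluid_energy (v1 t0) (O1 t0)" "0 < fluid_energy (v2 t0) (O2 t0)"
    using int_v1 int_v2 by (simp_all add: fluid_energy_def)
qed

(* Central step: F -> 0, by the Barbalat-type lemma applied to the energy of fluid 1,
   which is bounded by 1 and grows at rate 2 F E >= 2 E(t0) F. *)
lemma dust_F_tendsto_zero: "(dust_F \<longlongrightarrow> 0) at_top"
proof (rule tendsto_zero_if_lipschitz_and_integrable
    [where L=48 and k="2 * fluid_energy (v1 t0) (O1 t0)" and M=1
      and E="\<lambda>t. fluid_energy (v1 t) (O1 t)" and E'="\<lambda>t. 2 * dust_F t * fluid_energy (v1 t) (O1 t)"])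
  fix t assume t: "t0 \<le> t"
  show "((\<lambda>t. fluid_energy (v1 t) (O1 t)) has_real_derivative 2 * dust_F t * fluid_energy (v1 t) (O1 t))
      (at t within {t0..})"
    using reduced_equations(1,3)[OF t] by (rule fluid_energy_derivative)
  show "2 * fluid_energy (v1 t0) (O1 t0) * dust_F t \<le> 2 * dust_F t * fluid_energy (v1 t) (O1 t)"
    using mult_right_mono[OF fluid_energies_lower_bound(1)[OF t] dust_F_bounds(4)[OF t]]
    by (simp add: algebra_simps)
  have "(O1 t)\<^sup>2 \<le> 1" using state_bounds(2,4)[OF t] by (simp add: power_le_one)
  then show "fluid_energy (v1 t) (O1 t) \<le> 1"
    using mult_mono[of "(O1 t)\<^sup>2" 1 "1 - (v1 t)\<^sup>2" 1] state_bounds(6)[OF t]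
    by (simp add: fluid_energy_def)
qed (use dust_F_bounds(4) dust_F_lipschitz initial_energies_pos in auto)

lemma q_tendsto: "((\<lambda>t. qf 0 (Sp t) (SA t) (SB t) (SC t) (v1 t) (v2 t) (O1 t) (O2 t)) \<longlongrightarrow> 1/2) at_top"
proof (rule Lim_transform_eventually)
  show "((\<lambda>t. (dust_F t + 1) / 2) \<longlongrightarrow> 1/2) at_top"
    using tendsto_divide[OF tendsto_add[OF dust_F_tendsto_zero tendsto_const] tendsto_const] by simp
  show "eventually (\<lambda>t. (dust_F t + 1) / 2 = qf 0 (Sp t) (SA t) (SB t) (SC t) (v1 t) (v2 t) (O1 t) (O2 t)) at_top"
    using eventually_ge_at_top[of t0] by eventually_elim (simp add: q_eq_dust_F)
qed

(* The matter content is squeezed: 1 - F <= Omega_1 + Omega_2 <= 1. *)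
lemma matter_tendsto: "((\<lambda>t. O1 t + O2 t) \<longlongrightarrow> 1) at_top"
proof (rule tendsto_sandwich[where f="\<lambda>t. 1 - dust_F t" and h="\<lambda>t. 1"])
  have "1 - dust_F t \<le> O1 t + O2 t" if "t0 \<le> t" for t
    using constraint[OF that] dust_F_bounds(1)[OF that] by linarith
  then show "eventually (\<lambda>t. 1 - dust_F t \<le> O1 t + O2 t) at_top"
    by (rule eventually_at_top_linorderI)
  have "O1 t + O2 t \<le> 1" if "t0 \<le> t" for t
    using constraint[OF that] Sig2_bounds(1)[of "Sp t" "SA t" "SB t" "SC t"] by linarith
  then show "eventually (\<lambda>t. O1 t + O2 t \<le> 1) at_top"
    by (rule eventually_at_top_linorderI)
  show "((\<lambda>t. 1 - dust_F t) \<longlongrightarrow> 1) at_top"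
    using tendsto_diff[OF tendsto_const dust_F_tendsto_zero] by simp
qed simp

(* Each shear variable squared is at most Sigma^2 <= F. *)
lemma shear_tendsto_zero:
  shows "(Sp \<longlongrightarrow> 0) at_top" "(SA \<longlongrightarrow> 0) at_top" "(SB \<longlongrightarrow> 0) at_top" "(SC \<longlongrightarrow> 0) at_top"
proof -
  note square_bounded = tendsto_zero_if_square_bounded[OF dust_F_tendsto_zero]
  note shear_le_F = order_trans[OF Sig2_bounds(2) dust_F_bounds(1)]
    order_trans[OF Sig2_bounds(3) dust_F_bounds(1)]
    order_trans[OF Sig2_bounds(4) dust_F_bounds(1)]
    order_trans[OF Sig2_bounds(5) dust_F_bounds(1)]
  show "(Sp \<longlongrightarrow> 0) at_top" by (rule square_bounded) (erule shear_le_F(1))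
  show "(SA \<longlongrightarrow> 0) at_top" by (rule square_bounded) (erule shear_le_F(2))
  show "(SB \<longlongrightarrow> 0) at_top" by (rule square_bounded) (erule shear_le_F(3))
  show "(SC \<longlongrightarrow> 0) at_top" by (rule square_bounded) (erule shear_le_F(4))
qed

(* The tilts vanish because v_i^2 E_i(t0) <= v_i^2 Omega_i <= F. *)
lemma tilt_tendsto_zero:
  shows "(v1 \<longlongrightarrow> 0) at_top" "(v2 \<longlongrightarrow> 0) at_top"
proof -
  define e1 e2 where "e1 = fluid_energy (v1 t0) (O1 t0)" and "e2 = fluid_energy (v2 t0) (O2 t0)"
  have e_pos: "0 < e1" "0 < e2" using initial_energies_pos by (simp_all add: e1_def e2_def)
  have F_e: "((\<lambda>t. dust_F t / e) \<longlongrightarrow> 0) at_top" for e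
    using tendsto_divide_zero[OF dust_F_tendsto_zero] .
  have tilt_le_F: "(v1 t)\<^sup>2 \<le> dust_F t / e1" "(v2 t)\<^sup>2 \<le> dust_F t / e2" if t: "t0 \<le> t" for t
  proof -
    have "(v1 t)\<^sup>2 * e1 \<le> dust_F t" "(v2 t)\<^sup>2 * e2 \<le> dust_F t"
      using tilt_square_bound[OF fluid_energies_lower_bound(1)[OF t] state_bounds(6,2,4)[OF t]]
        tilt_square_bound[OF fluid_energies_lower_bound(2)[OF t] state_bounds(7,3,5)[OF t]]
        dust_F_bounds(2,3)[OF t] unfolding e1_def e2_def by linarith+
    then show "(v1 t)\<^sup>2 \<le> dust_F t / e1" "(v2 t)\<^sup>2 \<le> dust_F t / e2"
      using e_pos by (simp_all add: pos_le_divide_eq)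
  qed
  show "(v1 \<longlongrightarrow> 0) at_top" by (rule tendsto_zero_if_square_bounded[OF F_e]) (erule tilt_le_F(1))
  show "(v2 \<longlongrightarrow> 0) at_top" by (rule tendsto_zero_if_square_bounded[OF F_e]) (erule tilt_le_F(2))
qed

end

end

theorem mainTheorem1:
  fixes t0 :: real and Sp SA SB SC v1 v2 O1 O2 :: "real \<Rightarrow> real"
  assumes sol: "is_solution 0 t0 Sp SA SB SC v1 v2 O1 O2"
    and adm: "\<forall>t\<ge>t0. admissible 0 (Sp t) (SA t) (SB t) (SC t) (v1 t) (v2 t) (O1 t) (O2 t)"
    and int_O: "O1 t0 * O2 t0 > 0"
    and int_v1: "0 < (v1 t0)\<^sup>2" "(v1 t0)\<^sup>2 < 1"
    and int_v2: "0 < (v2 t0)\<^sup>2" "(v2 t0)\<^sup>2 < 1"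
  shows "((\<lambda>t. qf 0 (Sp t) (SA t) (SB t) (SC t) (v1 t) (v2 t) (O1 t) (O2 t)) \<longlongrightarrow> 1/2) at_top \<and>
         ((\<lambda>t. O1 t + O2 t) \<longlongrightarrow> 1) at_top \<and>
         (Sp \<longlongrightarrow> 0) at_top \<and> (SA \<longlongrightarrow> 0) at_top \<and>
         (SB \<longlongrightarrow> 0) at_top \<and> (SC \<longlongrightarrow> 0) at_top \<and>
         (v1 \<longlongrightarrow> 0) at_top \<and> (v2 \<longlongrightarrow> 0) at_top"
  using q_tendsto[OF assms] matter_tendsto[OF assms]
    shear_tendsto_zero[OF assms] tilt_tendsto_zero[OF assms]
  by blast

end
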